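(* Let $G$ be a group acting as a convergence group on a compact Hausdorff space $X$ with at least $3$ points. Then $(X,G)$ is null.
   Context: A net $\{s_i\}_{i\in I}$ in $G$ is wandering if for every $s\in G$, $s_i\neq s$ for all sufficiently large $i$. $G$ acts as a (discrete) convergence group on $X$ if the action is by homeomorphisms and for every wandering net $\{s_i\}$ in $G$ there exist $x,y\in X$ and a subnet $\{s_j\}_{j\in J}$ such that $s_jK\to y$ as $j\to\infty$ for every compact $K\subseteq X\setminus\{x\}$. For a sequence $\mathfrak s=\{s_n\}$ in $G$ and a finite open cover ${\mathcal U}$ of $X$, ${\rm h}_{\rm top}(X,{\mathcal U};\mathfrak s)=\limsup_{n\to\infty}\frac1n\log N(\bigvee_{i=1}^ns_i^{-1}{\mathcal U})$, with $N(\cdot)$ the minimal cardinality of a subcover. $(X,G)$ is null if ${\rm h}_{\rm top}(X,{\mathcal U};\mathfrak s)=0$ for all finite open covers ${\mathcal U}$ and all sequences $\mathfrak s$ in $G$. *)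

theory Defs
  imports "HOL-Analysis.Analysis" "HOL-Algebra.Group_Action"
begin

text \<open>Action of a (discrete) group G by homeomorphisms on the whole space UNIV.
 Inverses of the maps are again maps of the action, so continuity of every
 map gives homeomorphisms.\<close>
definition homeo_action :: "('g, 'b) monoid_scheme \<Rightarrow> ('g \<Rightarrow> 'a::topological_space \<Rightarrow> 'a) \<Rightarrow> bool" where
  "homeo_action G \<phi> \<longleftrightarrow> group_action G UNIV \<phi> \<and> (\<forall>g\<in>carrier G. continuous_on UNIV (\<phi> g))"

text \<open>Nets in G are represented by their (proper) image filters on G; a subnet
 corresponds to a finer proper filter. A net is wandering iff each element is
 eventually avoided.\<close>
definition wandering :: "('g, 'b) monoid_scheme \<Rightarrow> 'g filter \<Rightarrow> bool" where
  "wandering G F \<longleftrightarrow> F \<noteq> bot \<and> eventually (\<lambda>g. g \<in> carrier G) F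
      \<and> (\<forall>s\<in>carrier G. eventually (\<lambda>g. g \<noteq> s) F)"

definition sets_converge_to :: "('g \<Rightarrow> 'a::topological_space \<Rightarrow> 'a) \<Rightarrow> 'a set \<Rightarrow> 'a \<Rightarrow> 'g filter \<Rightarrow> bool" where
  "sets_converge_to \<phi> K y F \<longleftrightarrow> (\<forall>U. open U \<and> y \<in> U \<longrightarrow> eventually (\<lambda>g. \<phi> g ` K \<subseteq> U) F)"

definition convergence_group :: "('g, 'b) monoid_scheme \<Rightarrow> ('g \<Rightarrow> 'a::topological_space \<Rightarrow> 'a) \<Rightarrow> bool" where
  "convergence_group G \<phi> \<longleftrightarrow> homeo_action G \<phi> \<and>
     (\<forall>F. wandering G F \<longrightarrow>
        (\<exists>x y F'. F' \<noteq> bot \<and> F' \<le> F \<and>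
           (\<forall>K. compact K \<and> K \<subseteq> UNIV - {x} \<longrightarrow> sets_converge_to \<phi> K y F')))"

definition open_cover :: "'a::topological_space set set \<Rightarrow> bool" where
  "open_cover \<U> \<longleftrightarrow> finite \<U> \<and> (\<forall>U\<in>\<U>. open U) \<and> \<Union>\<U> = UNIV"

definition cover_num :: "'a set set \<Rightarrow> nat" where
  "cover_num \<C> = (LEAST k. \<exists>\<D>. \<D> \<subseteq> \<C> \<and> finite \<D> \<and> card \<D> = k \<and> \<Union>\<D> = UNIV)"

definition join_cover :: "('g \<Rightarrow> 'a \<Rightarrow> 'a) \<Rightarrow> (nat \<Rightarrow> 'g) \<Rightarrow> 'a set set \<Rightarrow> nat \<Rightarrow> 'a set set" where
  "join_cover \<phi> s \<U> n = {(\<Inter>i\<in>{1..n}. \<phi> (s i) -` V i) | V. \<forall>i\<in>{1..n}. V i \<in> \<U>}"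

definition seq_entropy :: "('g \<Rightarrow> 'a \<Rightarrow> 'a) \<Rightarrow> 'a set set \<Rightarrow> (nat \<Rightarrow> 'g) \<Rightarrow> ereal" where
  "seq_entropy \<phi> \<U> s = limsup (\<lambda>n. ereal (ln (real (cover_num (join_cover \<phi> s \<U> n))) / real n))"

definition null_system :: "('g, 'b) monoid_scheme \<Rightarrow> ('g \<Rightarrow> 'a::topological_space \<Rightarrow> 'a) \<Rightarrow> bool" where
  "null_system G \<phi> \<longleftrightarrow> (\<forall>\<U> s. open_cover \<U> \<and> (\<forall>n. s n \<in> carrier G) \<longrightarrow> seq_entropy \<phi> \<U> s = 0)"

end

theory Submission
  imports Defs
begin

text \<open>The convergence property leaves only finitely many g in G
 for which no a, b \<in> \<U> satisfy g(X - a) \<subseteq> b; applied to h g\<inverse>, it shows that for each g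
 all but boundedly many h admit a, b \<in> \<U> with g\<inverse> a \<union> h\<inverse> b = X.
 Given a finite set T \<subseteq> G and g \<in> T, the pigeonhole principle then yields one a \<in> \<U> serving a
 set Q \<subseteq> T - {g} of at least (|T| - 1 - e)/|\<U>| elements. Points of g\<inverse> a are covered by refining
 a subcover for T - {g}, and points outside g\<inverse> a lie in all the h\<inverse> b(h), h \<in> Q, so a subcover for
 T - {g} - Q suffices there. The resulting recursion
 N(T) \<le> N(T - {g}) + |\<U>| N(T - {g} - Q) gives N(T) \<le> C(\<epsilon>) exp(\<epsilon> |T|) for every \<epsilon> > 0,
 so all sequence entropies vanish.\<close>

lemma card_image_Un_UN_image_le:
  assumes "finite A" "finite B" "finite I"
  shows "card (f ` A \<union> (\<Union>i\<in>I. g i ` B)) \<le> card A + card I * card B"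
proof -
  have "card (f ` A \<union> (\<Union>i\<in>I. g i ` B)) \<le> card (f ` A) + card (\<Union>i\<in>I. g i ` B)"
    by (rule card_Un_le)
  also have "\<dots> \<le> card A + (\<Sum>i\<in>I. card (g i ` B))"
    by (intro add_mono card_image_le[OF assms(1)] card_UN_le[OF assms(3)])
  also have "\<dots> \<le> card A + (\<Sum>i\<in>I. card B)"
    by (intro add_mono order_refl sum_mono card_image_le[OF assms(2)])
  finally show ?thesis by simp
qed

lemma exists_large_fibre:
  assumes "finite Q" "finite \<U>" "\<U> \<noteq> {}" "\<And>h. h \<in> Q \<Longrightarrow> \<alpha> h \<in> \<U>"
  shows "\<exists>a\<in>\<U>. card Q \<le> card \<U> * card {h\<in>Q. \<alpha> h = a}"
proof (rule ccontr)
  assume "\<not> ?thesis"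
  then have small: "\<forall>a\<in>\<U>. card \<U> * card {h\<in>Q. \<alpha> h = a} < card Q" by auto
  have "Q = (\<Union>a\<in>\<U>. {h\<in>Q. \<alpha> h = a})" using assms(4) by auto
  then have "card Q \<le> (\<Sum>a\<in>\<U>. card {h\<in>Q. \<alpha> h = a})"
    by (metis card_UN_le assms(2))
  then have "card \<U> * card Q \<le> (\<Sum>a\<in>\<U>. card \<U> * card {h\<in>Q. \<alpha> h = a})"
    by (simp flip: sum_distrib_left)
  also have "\<dots> < (\<Sum>a\<in>\<U>. card Q)"
    using small assms(2,3) by (intro sum_strict_mono) auto
  also have "\<dots> = card \<U> * card Q" by simp
  finally show False by simp
qed

lemma cover_num_le:
  assumes "\<D> \<subseteq> \<C>" "finite \<D>" "\<Union>\<D> = UNIV"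
  shows "cover_num \<C> \<le> card \<D>"
  unfolding cover_num_def using assms by (intro Least_le) blast

lemma cover_num_attained:
  assumes "\<D>\<^sub>0 \<subseteq> \<C>" "finite \<D>\<^sub>0" "\<Union>\<D>\<^sub>0 = UNIV"
  obtains \<D> where "\<D> \<subseteq> \<C>" "finite \<D>" "\<Union>\<D> = UNIV" "card \<D> = cover_num \<C>"
proof -
  have "\<exists>k \<D>. \<D> \<subseteq> \<C> \<and> finite \<D> \<and> card \<D> = k \<and> \<Union>\<D> = UNIV"
    using assms by blast
  from LeastI_ex[OF this] show ?thesis
    using that unfolding cover_num_def by blast
qed

lemma cover_num_pos:
  assumes "\<D>\<^sub>0 \<subseteq> \<C>" "finite \<D>\<^sub>0" "\<Union>\<D>\<^sub>0 = UNIV"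
  shows "cover_num \<C> \<ge> 1"
proof -
  obtain \<D> where D: "\<D> \<subseteq> \<C>" "finite \<D>" "\<Union>\<D> = UNIV" "card \<D> = cover_num \<C>"
    using cover_num_attained[OF assms] by blast
  have "\<D> \<noteq> {}" using D(3) by auto
  then have "0 < card \<D>" using D(2) by (simp add: card_gt_0_iff)
  then show ?thesis using D(4) by simp
qed

lemma cover_num_antimono:
  assumes "\<C> \<subseteq> \<C>'" "finite \<C>" "\<Union>\<C> = UNIV"
  shows "cover_num \<C>' \<le> cover_num \<C>"
proof -
  obtain \<D> where "\<D> \<subseteq> \<C>" "finite \<D>" "\<Union>\<D> = UNIV" "card \<D> = cover_num \<C>"
    using cover_num_attained[OF order_refl assms(2,3)] by metis
  with assms(1) show ?thesis using cover_num_le[of \<D> \<C>'] by simp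
qed

section \<open>Joins of preimage covers\<close>

text \<open>Indexed by a set of indices rather than by positions in a sequence, so repeated entries
 count once; preimage_join_subset_join_cover relates it to join_cover.\<close>
definition preimage_join :: "('g \<Rightarrow> 'a \<Rightarrow> 'b) \<Rightarrow> 'b set set \<Rightarrow> 'g set \<Rightarrow> 'a set set" where
  "preimage_join f \<U> T = {(\<Inter>h\<in>T. f h -` V h) | V. \<forall>h\<in>T. V h \<in> \<U>}"

lemma preimage_join_memI:
  assumes "\<And>h. h \<in> T \<Longrightarrow> V h \<in> \<U>"
  shows "(\<Inter>h\<in>T. f h -` V h) \<in> preimage_join f \<U> T"
  using assms unfolding preimage_join_def by blast

lemma preimage_join_singleton:
  "a \<in> \<U> \<Longrightarrow> f g -` a \<in> preimage_join f \<U> {g}"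
  using preimage_join_memI[of "{g}" "\<lambda>_. a" \<U> f] by simp

lemma preimage_join_Int:
  assumes "S \<in> preimage_join f \<U> T" "R \<in> preimage_join f \<U> Q" "T \<inter> Q = {}"
  shows "S \<inter> R \<in> preimage_join f \<U> (T \<union> Q)"
proof -
  obtain V where V: "S = (\<Inter>h\<in>T. f h -` V h)" "\<forall>h\<in>T. V h \<in> \<U>"
    using assms(1) unfolding preimage_join_def by blast
  obtain W where W: "R = (\<Inter>h\<in>Q. f h -` W h)" "\<forall>h\<in>Q. W h \<in> \<U>"
    using assms(2) unfolding preimage_join_def by blast
  let ?VW = "\<lambda>h. if h \<in> T then V h else W h"
  have "(\<Inter>h\<in>T. f h -` ?VW h) = S" unfolding V(1) by (rule INF_cong) auto
  moreover have "(\<Inter>h\<in>Q. f h -` ?VW h) = R" unfolding W(1) using assms(3) by (intro INF_cong) auto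
  ultimately have "S \<inter> R = (\<Inter>h\<in>T \<union> Q. f h -` ?VW h)"
    by (simp add: INT_Un)
  also have "\<dots> \<in> preimage_join f \<U> (T \<union> Q)"
    using V(2) W(2) by (intro preimage_join_memI) auto
  finally show ?thesis .
qed

lemma preimage_join_eq_image:
  "preimage_join f \<U> T = (\<lambda>V. \<Inter>h\<in>T. f h -` V h) ` (T \<rightarrow>\<^sub>E \<U>)"
proof (intro equalityI subsetI)
  fix S assume "S \<in> preimage_join f \<U> T"
  then obtain V where "S = (\<Inter>h\<in>T. f h -` V h)" "\<forall>h\<in>T. V h \<in> \<U>"
    unfolding preimage_join_def by blast
  then have "S = (\<Inter>h\<in>T. f h -` restrict V T h)" "restrict V T \<in> T \<rightarrow>\<^sub>E \<U>" by auto
  then show "S \<in> (\<lambda>V. \<Inter>h\<in>T. f h -` V h) ` (T \<rightarrow>\<^sub>E \<U>)" by blast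
qed (auto simp: preimage_join_def)

lemma finite_preimage_join: "finite T \<Longrightarrow> finite \<U> \<Longrightarrow> finite (preimage_join f \<U> T)"
  by (simp add: preimage_join_eq_image finite_PiE)

lemma card_preimage_join_le:
  assumes "finite T" "finite \<U>"
  shows "card (preimage_join f \<U> T) \<le> card \<U> ^ card T"
proof -
  have "card (preimage_join f \<U> T) \<le> card (T \<rightarrow>\<^sub>E \<U>)"
    unfolding preimage_join_eq_image using assms by (simp add: card_image_le finite_PiE)
  also have "\<dots> = card \<U> ^ card T" using assms by (simp add: card_PiE)
  finally show ?thesis .
qed

lemma Union_preimage_join:
  assumes "\<Union>\<U> = UNIV"
  shows "\<Union>(preimage_join f \<U> T) = UNIV"
proof -
  have "x \<in> \<Union>(preimage_join f \<U> T)" for x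
  proof -
    have "f h x \<in> \<Union>\<U>" for h using assms by simp
    then have "\<forall>h. \<exists>V. V \<in> \<U> \<and> f h x \<in> V" by blast
    then obtain V where V: "\<forall>h. V h \<in> \<U> \<and> f h x \<in> V h" by (rule choice[THEN exE])
    then have "x \<in> (\<Inter>h\<in>T. f h -` V h)" by blast
    moreover have "(\<Inter>h\<in>T. f h -` V h) \<in> preimage_join f \<U> T"
      using V by (intro preimage_join_memI) blast
    ultimately show ?thesis by (rule UnionI[rotated])
  qed
  then show ?thesis by blast
qed

lemma cover_num_preimage_join_le_power:
  assumes "finite T" "finite \<U>" "\<Union>\<U> = UNIV"
  shows "cover_num (preimage_join f \<U> T) \<le> card \<U> ^ card T"
  using cover_num_le[OF order_refl finite_preimage_join[OF assms(1,2)] Union_preimage_join[OF assms(3)]]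
    card_preimage_join_le[OF assms(1,2)] by (rule order_trans)

lemma preimage_join_insert:
  assumes "S \<in> preimage_join f \<U> T" "g \<notin> T" "a \<in> \<U>"
  shows "S \<inter> f g -` a \<in> preimage_join f \<U> (insert g T)"
  using preimage_join_Int[OF assms(1) preimage_join_singleton[OF assms(3)]] assms(2) by simp

lemma preimage_join_insert_subcover:
  assumes "finite \<U>" "\<Union>\<U> = UNIV" "g \<notin> T" "a \<in> \<U>" "Q \<subseteq> T"
    and b: "\<And>h. h \<in> Q \<Longrightarrow> b h \<in> \<U>" "\<And>h. h \<in> Q \<Longrightarrow> f g -` a \<union> f h -` b h = UNIV"
    and D1: "D1 \<subseteq> preimage_join f \<U> T" "finite D1" "\<Union>D1 = UNIV"
    and D2: "D2 \<subseteq> preimage_join f \<U> (T - Q)" "finite D2" "\<Union>D2 = UNIV"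
  obtains D where "D \<subseteq> preimage_join f \<U> (insert g T)" "finite D" "\<Union>D = UNIV"
    "card D \<le> card D1 + card \<U> * card D2"
proof
  let ?J = "preimage_join f \<U>"
  define B where "B = (\<Inter>h\<in>Q. f h -` b h)"
  define D where "D = (\<lambda>S. S \<inter> f g -` a) ` D1 \<union> (\<Union>V\<in>\<U>. (\<lambda>S. S \<inter> (B \<inter> f g -` V)) ` D2)"
  have "S \<inter> f g -` a \<in> ?J (insert g T)" if "S \<in> D1" for S
    using D1(1) that assms(3,4) by (intro preimage_join_insert) auto
  moreover have "S \<inter> (B \<inter> f g -` V) \<in> ?J (insert g T)" if "S \<in> D2" "V \<in> \<U>" for S V
  proof -
    have "B \<in> ?J Q" unfolding B_def using b(1) by (rule preimage_join_memI)
    then have "B \<inter> f g -` V \<in> ?J (insert g Q)"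
      using assms(3,5) that(2) by (intro preimage_join_insert) auto
    moreover have "(T - Q) \<inter> insert g Q = {}" using assms(3) by auto
    ultimately have "S \<inter> (B \<inter> f g -` V) \<in> ?J (T - Q \<union> insert g Q)"
      using preimage_join_Int subsetD[OF D2(1) that(1)] by blast
    moreover have "T - Q \<union> insert g Q = insert g T" using assms(5) by auto
    ultimately show ?thesis by simp
  qed
  ultimately show "D \<subseteq> ?J (insert g T)" unfolding D_def by auto
  show "finite D" unfolding D_def using assms(1) D1(2) D2(2) by simp
  show "\<Union>D = UNIV"
  proof -
    have "x \<in> \<Union>D" for x
    proof (cases "f g x \<in> a")
      case True
      have "x \<in> \<Union>D1" using D1(3) by simp
      then obtain S where "S \<in> D1" "x \<in> S" by blast
      then have "S \<inter> f g -` a \<in> D" "x \<in> S \<inter> f g -` a" using True unfolding D_def by auto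
      then show ?thesis by blast
    next
      case False
      have "x \<in> f g -` a \<union> f h -` b h" if "h \<in> Q" for h using b(2)[OF that] by simp
      with False have "x \<in> B" unfolding B_def by blast
      have "x \<in> \<Union>D2" using D2(3) by simp
      then obtain S where S: "S \<in> D2" "x \<in> S" by blast
      have "f g x \<in> \<Union>\<U>" using assms(2) by simp
      then obtain V where V: "V \<in> \<U>" "f g x \<in> V" by blast
      have "S \<inter> (B \<inter> f g -` V) \<in> D" unfolding D_def using S(1) V(1) by blast
      moreover have "x \<in> S \<inter> (B \<inter> f g -` V)" using S(2) V(2) \<open>x \<in> B\<close> by simp
      ultimately show ?thesis by blast
    qed
    then show ?thesis by blast
  qed
  show "card D \<le> card D1 + card \<U> * card D2"
    unfolding D_def using D1(2) D2(2) assms(1) by (rule card_image_Un_UN_image_le)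
qed

lemma cover_num_preimage_join_insert_le:
  assumes "finite \<U>" "\<Union>\<U> = UNIV" "finite T" "g \<notin> T" "a \<in> \<U>" "Q \<subseteq> T"
    and "\<And>h. h \<in> Q \<Longrightarrow> b h \<in> \<U>" "\<And>h. h \<in> Q \<Longrightarrow> f g -` a \<union> f h -` b h = UNIV"
  shows "cover_num (preimage_join f \<U> (insert g T))
    \<le> cover_num (preimage_join f \<U> T) + card \<U> * cover_num (preimage_join f \<U> (T - Q))"
proof -
  obtain D1 where D1: "D1 \<subseteq> preimage_join f \<U> T" "finite D1" "\<Union>D1 = UNIV"
      "card D1 = cover_num (preimage_join f \<U> T)"
    using cover_num_attained[OF order_refl finite_preimage_join[OF assms(3,1)]
        Union_preimage_join[OF assms(2)]] by blast
  obtain D2 where D2: "D2 \<subseteq> preimage_join f \<U> (T - Q)" "finite D2" "\<Union>D2 = UNIV"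
      "card D2 = cover_num (preimage_join f \<U> (T - Q))"
    using cover_num_attained[OF order_refl finite_preimage_join[OF finite_Diff[OF assms(3)] assms(1)]
        Union_preimage_join[OF assms(2)]] by blast
  obtain D where D: "D \<subseteq> preimage_join f \<U> (insert g T)" "finite D" "\<Union>D = UNIV"
      "card D \<le> card D1 + card \<U> * card D2"
    using preimage_join_insert_subcover[OF assms(1,2,4-8) D1(1-3) D2(1-3)] by blast
  have "cover_num (preimage_join f \<U> (insert g T)) \<le> card D"
    using D(1-3) by (rule cover_num_le)
  with D(4) D1(4) D2(4) show ?thesis by simp
qed

definition pair_covers :: "('g \<Rightarrow> 'a \<Rightarrow> 'b) \<Rightarrow> 'b set set \<Rightarrow> 'g \<Rightarrow> 'g \<Rightarrow> bool" where
  "pair_covers f \<U> g h \<longleftrightarrow> (\<exists>a\<in>\<U>. \<exists>b\<in>\<U>. f g -` a \<union> f h -` b = UNIV)"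

lemma cover_num_preimage_join_recursion:
  assumes "finite \<U>" "\<Union>\<U> = UNIV"
    and "finite {h\<in>A. \<not> pair_covers f \<U> g h}" "card {h\<in>A. \<not> pair_covers f \<U> g h} \<le> e"
    and "T \<subseteq> A" "finite T" "g \<in> T"
  obtains Q where "Q \<subseteq> T - {g}" "card T \<le> card \<U> * card Q + e + 1"
    "cover_num (preimage_join f \<U> T)
      \<le> cover_num (preimage_join f \<U> (T - {g})) + card \<U> * cover_num (preimage_join f \<U> (T - {g} - Q))"
proof -
  define P where "P = {h \<in> T - {g}. pair_covers f \<U> g h}"
  let ?B = "{h\<in>A. \<not> pair_covers f \<U> g h}"
  have "finite P" unfolding P_def using assms(6) by simp
  have "card (T - {g}) \<le> card (P \<union> ?B)"
    using assms(5) \<open>finite P\<close> assms(3) unfolding P_def by (intro card_mono) auto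
  also have "\<dots> \<le> card P + e" using card_Un_le[of P ?B] assms(4) by linarith
  finally have cardT: "card T \<le> card P + e + 1" using assms(6,7) by (simp add: card_Diff_singleton)
  have "\<forall>h\<in>P. \<exists>a\<in>\<U>. \<exists>b\<in>\<U>. f g -` a \<union> f h -` b = UNIV"
    unfolding P_def pair_covers_def by blast
  then obtain \<alpha> \<beta> where \<alpha>\<beta>: "\<And>h. h \<in> P \<Longrightarrow> \<alpha> h \<in> \<U> \<and> \<beta> h \<in> \<U> \<and> f g -` \<alpha> h \<union> f h -` \<beta> h = UNIV"
    by metis
  have "\<U> \<noteq> {}" using assms(2) by auto
  then obtain a where a: "a \<in> \<U>" "card P \<le> card \<U> * card {h\<in>P. \<alpha> h = a}"
    using exists_large_fibre[of P \<U> \<alpha>] assms(1) \<open>finite P\<close> \<alpha>\<beta> by blast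
  let ?Q = "{h\<in>P. \<alpha> h = a}"
  have \<beta>: "\<beta> h \<in> \<U>" "f g -` a \<union> f h -` \<beta> h = UNIV" if "h \<in> ?Q" for h
  proof -
    have "h \<in> P" "\<alpha> h = a" using that by simp_all
    with \<alpha>\<beta> show "\<beta> h \<in> \<U>" "f g -` a \<union> f h -` \<beta> h = UNIV" by blast+
  qed
  have "?Q \<subseteq> T - {g}" unfolding P_def by auto
  moreover have "card T \<le> card \<U> * card ?Q + e + 1" using cardT a(2) by linarith
  moreover have "cover_num (preimage_join f \<U> (insert g (T - {g})))
      \<le> cover_num (preimage_join f \<U> (T - {g})) + card \<U> * cover_num (preimage_join f \<U> (T - {g} - ?Q))"
    by (rule cover_num_preimage_join_insert_le[of \<U> "T - {g}" g a ?Q \<beta> f])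
      (use assms(1,2,6) a(1) \<beta> \<open>?Q \<subseteq> T - {g}\<close> in simp_all)
  moreover have "insert g (T - {g}) = T" using assms(7) by auto
  ultimately show ?thesis using that by simp
qed

section \<open>Subexponential growth from the recursion\<close>

lemma eventually_exp_recursion_le_1:
  fixes \<epsilon> :: real and k :: nat
  assumes "\<epsilon> > 0"
  shows "eventually (\<lambda>q. exp (- \<epsilon>) + k * exp (- \<epsilon> * real q) \<le> 1) sequentially"
proof -
  have "(\<lambda>q. exp (- \<epsilon>) + real k * exp (- \<epsilon>) ^ q) \<longlonglongrightarrow> exp (- \<epsilon>) + real k * 0"
    using assms by (intro tendsto_intros) simp
  moreover have "exp (- \<epsilon>) + real k * 0 < 1" using assms by simp
  ultimately have "eventually (\<lambda>q. exp (- \<epsilon>) + k * exp (- \<epsilon>) ^ q < 1) sequentially"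
    by (rule order_tendstoD)
  then show ?thesis
    by (rule eventually_mono) (simp add: mult.commute flip: exp_of_nat_mult)
qed

lemma exp_recursion_step:
  fixes x y C \<epsilon> k :: real and n n\<^sub>1 n\<^sub>2 q :: nat
  assumes "C \<ge> 0" "k \<ge> 0" "\<epsilon> \<ge> 0" "n\<^sub>1 + 1 = n" "n\<^sub>2 + q + 1 \<le> n"
    and "x \<le> C * exp (\<epsilon> * n\<^sub>1)" "y \<le> C * exp (\<epsilon> * n\<^sub>2)"
    and "exp (- \<epsilon>) + k * exp (- \<epsilon> * q) \<le> 1"
  shows "x + k * y \<le> C * exp (\<epsilon> * n)"
proof -
  have "exp (\<epsilon> * n\<^sub>2) \<le> exp (\<epsilon> * n) * exp (- \<epsilon> * q)"
    unfolding exp_add[symmetric] using assms(3,5) by (simp add: mult_left_mono flip: right_diff_distrib)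
  then have "y \<le> C * (exp (\<epsilon> * n) * exp (- \<epsilon> * q))"
    using assms(1,7) mult_left_mono order_trans by blast
  moreover have "exp (\<epsilon> * n\<^sub>1) = exp (\<epsilon> * n) * exp (- \<epsilon>)"
    unfolding exp_add[symmetric] using assms(4) by (auto simp: algebra_simps)
  ultimately have "x + k * y \<le> C * exp (\<epsilon> * n) * exp (- \<epsilon>) + k * (C * (exp (\<epsilon> * n) * exp (- \<epsilon> * q)))"
    using assms(2,6) by (intro add_mono mult_left_mono) auto
  also have "\<dots> = C * exp (\<epsilon> * n) * (exp (- \<epsilon>) + k * exp (- \<epsilon> * q))"
    by (simp add: algebra_simps)
  also have "\<dots> \<le> C * exp (\<epsilon> * n)"
    using assms(1,8) by (simp add: mult_left_le)
  finally show ?thesis .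
qed

lemma subexponential_of_recursion:
  fixes c :: "'x set \<Rightarrow> real" and k e :: nat and \<epsilon> :: real
  assumes "\<epsilon> > 0" "k \<ge> 1"
    and base: "\<And>T. T \<subseteq> A \<Longrightarrow> finite T \<Longrightarrow> c T \<le> k ^ card T"
    and step: "\<And>T. T \<subseteq> A \<Longrightarrow> finite T \<Longrightarrow> T \<noteq> {} \<Longrightarrow> \<exists>g\<in>T. \<exists>Q \<subseteq> T - {g}.
      card T \<le> k * card Q + e + 1 \<and> c T \<le> c (T - {g}) + k * c (T - {g} - Q)"
  shows "\<exists>C. \<forall>T. T \<subseteq> A \<longrightarrow> finite T \<longrightarrow> c T \<le> C * exp (\<epsilon> * card T)"
proof -
  obtain q0 where q0: "\<And>q. q \<ge> q0 \<Longrightarrow> exp (- \<epsilon>) + k * exp (- \<epsilon> * real q) \<le> 1"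
    using eventually_exp_recursion_le_1[OF assms(1)] unfolding eventually_sequentially by blast
  define N where "N = k * q0 + e + 1" \<comment> \<open>so that |T| \<ge> N forces |Q| \<ge> q0\<close>
  define C where "C = real k ^ N"
  have "c T \<le> C * exp (\<epsilon> * card T)" if "T \<subseteq> A" "finite T" for T
    using that
  proof (induction "card T" arbitrary: T rule: less_induct)
    case less
    show ?case
    proof (cases "card T < N")
      case True
      have "c T \<le> real k ^ card T" using base less.prems by simp
      also have "\<dots> \<le> C" unfolding C_def using True assms(2) by (intro power_increasing) auto
      also have "\<dots> \<le> C * exp (\<epsilon> * card T)" unfolding C_def using assms(1)
        by (simp add: mult_le_cancel_left1)
      finally show ?thesis .
    next
      case False
      then have "T \<noteq> {}" unfolding N_def by auto
      with step[OF less.prems] obtain g Q where g: "g \<in> T" and Q: "Q \<subseteq> T - {g}"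
          "card T \<le> k * card Q + e + 1" and rec: "c T \<le> c (T - {g}) + k * c (T - {g} - Q)"
        by blast
      have "k * q0 \<le> k * card Q" using False Q(2) unfolding N_def by linarith
      then have "q0 \<le> card Q" using assms(2) by simp
      have card1: "card (T - {g}) + 1 = card T" using card.remove[OF less.prems(2) g] by simp
      have "card (T - {g} - Q) = card (T - {g}) - card Q" "card Q \<le> card (T - {g})"
        using Q(1) less.prems(2) by (auto intro: card_Diff_subset card_mono finite_subset)
      with card1 have card2: "card (T - {g} - Q) + card Q + 1 \<le> card T" by linarith
      have "c (T - {g}) \<le> C * exp (\<epsilon> * card (T - {g}))"
        "c (T - {g} - Q) \<le> C * exp (\<epsilon> * card (T - {g} - Q))"
        using less.prems card1 card2 by (auto intro!: less.hyps)
      then have "c (T - {g}) + k * c (T - {g} - Q) \<le> C * exp (\<epsilon> * card T)"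
        using q0[OF \<open>q0 \<le> card Q\<close>] assms(1) card1 card2 unfolding C_def
        by (intro exp_recursion_step) auto
      with rec show ?thesis by linarith
    qed
  qed
  then show ?thesis by blast
qed

lemma cover_num_preimage_join_subexponential:
  fixes \<epsilon> :: real
  assumes "finite \<U>" "\<Union>\<U> = UNIV" "\<epsilon> > 0"
    and "\<And>g. g \<in> A \<Longrightarrow> finite {h\<in>A. \<not> pair_covers f \<U> g h}"
    and "\<And>g. g \<in> A \<Longrightarrow> card {h\<in>A. \<not> pair_covers f \<U> g h} \<le> e"
  shows "\<exists>C. \<forall>T. T \<subseteq> A \<longrightarrow> finite T \<longrightarrow> cover_num (preimage_join f \<U> T) \<le> C * exp (\<epsilon> * card T)"
proof (rule subexponential_of_recursion[where k = "card \<U>" and e = e])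
  have "\<U> \<noteq> {}" using assms(2) by auto
  then show "card \<U> \<ge> 1" using assms(1) by (simp add: Suc_le_eq card_gt_0_iff)
  show "real (cover_num (preimage_join f \<U> T)) \<le> real (card \<U> ^ card T)" if "finite T" for T
    using cover_num_preimage_join_le_power[OF that assms(1,2), of f] by simp
  show "\<exists>g\<in>T. \<exists>Q\<subseteq>T - {g}. card T \<le> card \<U> * card Q + e + 1 \<and>
      real (cover_num (preimage_join f \<U> T))
      \<le> real (cover_num (preimage_join f \<U> (T - {g}))) + card \<U> * real (cover_num (preimage_join f \<U> (T - {g} - Q)))"
    if T: "T \<subseteq> A" "finite T" "T \<noteq> {}" for T
  proof -
    obtain g where "g \<in> T" using T(3) by blast
    with T(1) have "g \<in> A" by blast
    obtain Q where "Q \<subseteq> T - {g}" "card T \<le> card \<U> * card Q + e + 1"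
      "cover_num (preimage_join f \<U> T)
        \<le> cover_num (preimage_join f \<U> (T - {g})) + card \<U> * cover_num (preimage_join f \<U> (T - {g} - Q))"
      using cover_num_preimage_join_recursion[OF assms(1,2) assms(4,5)[OF \<open>g \<in> A\<close>] T(1,2) \<open>g \<in> T\<close>] by blast
    then show ?thesis using \<open>g \<in> T\<close> by (intro bexI[of _ g] exI[of _ Q]) (simp_all flip: of_nat_mult of_nat_add)
  qed
qed (use assms(3) in simp_all)

lemma limsup_ln_over_n_eq_0:
  fixes c :: "nat \<Rightarrow> real"
  assumes pos: "\<And>n. c n \<ge> 1" and subexp: "\<And>\<epsilon>. \<epsilon> > 0 \<Longrightarrow> \<exists>C. \<forall>n. c n \<le> C * exp (\<epsilon> * n)"
  shows "limsup (\<lambda>n. ereal (ln (c n) / real n)) = 0"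
proof (rule antisym)
  show "limsup (\<lambda>n. ereal (ln (c n) / real n)) \<le> 0"
  proof (rule ereal_le_epsilon2)
    fix \<epsilon> :: real assume "\<epsilon> > 0"
    then obtain C where C: "\<And>n. c n \<le> C * exp (\<epsilon> / 2 * n)" using subexp[of "\<epsilon> / 2"] by auto
    have "1 \<le> C" using pos[of 0] C[of 0] by simp
    have "eventually (\<lambda>n. ln C / real n < \<epsilon> / 2) sequentially"
      by (rule order_tendstoD(2)[OF lim_const_over_n]) (use \<open>\<epsilon> > 0\<close> in simp)
    moreover have "eventually (\<lambda>n. n > 0) sequentially" by (rule eventually_gt_at_top)
    ultimately have "eventually (\<lambda>n. ereal (ln (c n) / real n) \<le> ereal \<epsilon>) sequentially"
    proof eventually_elim
      case (elim n)
      have "ln (c n) \<le> ln (C * exp (\<epsilon> / 2 * n))"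
        using C[of n] pos[of n] by (subst ln_le_cancel_iff) auto
      also have "\<dots> = ln C + \<epsilon> / 2 * n" using \<open>1 \<le> C\<close> by (simp add: ln_mult)
      finally have "ln (c n) / n \<le> ln C / n + \<epsilon> / 2"
        using elim(2) by (simp add: divide_simps)
      then have "ln (c n) / n \<le> \<epsilon>" using elim(1) by linarith
      then show ?case by simp
    qed
    then have "limsup (\<lambda>n. ereal (ln (c n) / real n)) \<le> ereal \<epsilon>" by (rule Limsup_bounded)
    then show "limsup (\<lambda>n. ereal (ln (c n) / real n)) \<le> 0 + ereal \<epsilon>" by simp
  qed
  have "ln (c n) / real n \<ge> 0" for n using pos[of n] by simp
  then show "0 \<le> limsup (\<lambda>n. ereal (ln (c n) / real n))"
    by (intro le_Limsup) simp_all
qed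

lemma preimage_join_subset_join_cover: "preimage_join \<phi> \<U> (s ` {1..n}) \<subseteq> join_cover \<phi> s \<U> n"
proof
  fix S assume "S \<in> preimage_join \<phi> \<U> (s ` {1..n})"
  then obtain V where V: "S = (\<Inter>h\<in>s ` {1..n}. \<phi> h -` V h)" "\<forall>h\<in>s ` {1..n}. V h \<in> \<U>"
    unfolding preimage_join_def by blast
  have "S = (\<Inter>i\<in>{1..n}. \<phi> (s i) -` V (s i))" using V(1) by (simp add: image_image)
  moreover have "\<forall>i\<in>{1..n}. V (s i) \<in> \<U>" using V(2) by simp
  ultimately show "S \<in> join_cover \<phi> s \<U> n"
    unfolding join_cover_def by (intro CollectI exI[of _ "\<lambda>i. V (s i)"] conjI)
qed

lemma seq_entropy_eq_0_if_subexponential: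
  assumes "finite \<U>" "\<Union>\<U> = UNIV" "range s \<subseteq> A"
    and subexp: "\<And>\<epsilon>::real. \<epsilon> > 0 \<Longrightarrow>
      \<exists>C. \<forall>T. T \<subseteq> A \<longrightarrow> finite T \<longrightarrow> cover_num (preimage_join \<phi> \<U> T) \<le> C * exp (\<epsilon> * card T)"
  shows "seq_entropy \<phi> \<U> s = 0"
proof -
  let ?J = "\<lambda>n. preimage_join \<phi> \<U> (s ` {1..n})"
  have J: "?J n \<subseteq> join_cover \<phi> s \<U> n" "finite (?J n)" "\<Union>(?J n) = UNIV" for n
    by (rule preimage_join_subset_join_cover,
        rule finite_preimage_join[OF finite_imageI[OF finite_atLeastAtMost] assms(1)],
        rule Union_preimage_join[OF assms(2)])
  have "limsup (\<lambda>n. ereal (ln (real (cover_num (join_cover \<phi> s \<U> n))) / real n)) = 0"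
  proof (rule limsup_ln_over_n_eq_0)
    show "1 \<le> real (cover_num (join_cover \<phi> s \<U> n))" for n using cover_num_pos[OF J] by simp
    fix \<epsilon> :: real assume "\<epsilon> > 0"
    then obtain C where C: "\<And>T. T \<subseteq> A \<Longrightarrow> finite T \<Longrightarrow>
        cover_num (preimage_join \<phi> \<U> T) \<le> C * exp (\<epsilon> * card T)"
      using subexp by blast
    have "0 \<le> C" using C[of "{}"] by simp
    have "real (cover_num (join_cover \<phi> s \<U> n)) \<le> C * exp (\<epsilon> * n)" for n
    proof -
      have "real (cover_num (join_cover \<phi> s \<U> n)) \<le> cover_num (?J n)"
        using cover_num_antimono[OF J] by simp
      also have "\<dots> \<le> C * exp (\<epsilon> * card (s ` {1..n}))" using assms(3) by (intro C) auto
      also have "\<dots> \<le> C * exp (\<epsilon> * n)"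
        using \<open>0 \<le> C\<close> \<open>\<epsilon> > 0\<close> card_image_le[of "{1..n}" s] by (intro mult_left_mono) auto
      finally show ?thesis .
    qed
    then show "\<exists>C. \<forall>n. real (cover_num (join_cover \<phi> s \<U> n)) \<le> C * exp (\<epsilon> * n)" by blast
  qed
  then show ?thesis unfolding seq_entropy_def .
qed

section \<open>Convergence groups\<close>

lemma wandering_cofinite_principal:
  assumes "infinite B" "B \<subseteq> carrier G"
  shows "wandering G (inf cofinite (principal B))"
proof -
  have ev: "eventually P (inf cofinite (principal B)) \<longleftrightarrow> finite {g \<in> B. \<not> P g}" for P
    unfolding eventually_inf_principal eventually_cofinite by (simp add: conj_commute)
  have "inf cofinite (principal B) \<noteq> bot"
    using ev[of "\<lambda>_. False"] assms(1) by (auto simp: eventually_False)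
  moreover have "eventually (\<lambda>g. g \<in> carrier G) (inf cofinite (principal B))"
    unfolding ev by (rule finite_subset[of _ "{}"]) (use assms(2) in auto)
  moreover have "eventually (\<lambda>g. g \<noteq> s) (inf cofinite (principal B))" for s
    unfolding ev by (rule finite_subset[of _ "{s}"]) auto
  ultimately show ?thesis unfolding wandering_def by blast
qed

lemma convergence_group_finite_noncontracting:
  fixes \<phi> :: "'g \<Rightarrow> 'a::topological_space \<Rightarrow> 'a"
  assumes "convergence_group G \<phi>" "compact (UNIV :: 'a set)" "open_cover \<U>"
  shows "finite {g \<in> carrier G. \<not> (\<exists>a\<in>\<U>. \<exists>b\<in>\<U>. \<phi> g ` (- a) \<subseteq> b)}"
proof (rule ccontr)
  let ?B = "{g \<in> carrier G. \<not> (\<exists>a\<in>\<U>. \<exists>b\<in>\<U>. \<phi> g ` (- a) \<subseteq> b)}"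
  define F where "F = inf cofinite (principal ?B)"
  assume "infinite ?B"
  then have "wandering G F" unfolding F_def by (rule wandering_cofinite_principal) auto
  then have "\<exists>x y F'. F' \<noteq> bot \<and> F' \<le> F \<and>
      (\<forall>K. compact K \<and> K \<subseteq> UNIV - {x} \<longrightarrow> sets_converge_to \<phi> K y F')"
    using assms(1) unfolding convergence_group_def by blast
  then obtain x y F' where F': "F' \<noteq> bot" "F' \<le> F"
    and conv: "\<And>K. compact K \<Longrightarrow> K \<subseteq> UNIV - {x} \<Longrightarrow> sets_converge_to \<phi> K y F'"
    by blast
  have "x \<in> \<Union>\<U>" "y \<in> \<Union>\<U>" and opens: "\<And>U. U \<in> \<U> \<Longrightarrow> open U"
    using assms(3) unfolding open_cover_def by auto
  then obtain a b where a: "a \<in> \<U>" "x \<in> a" and b: "b \<in> \<U>" "y \<in> b" by blast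
  have "compact (- a)"
    using compact_Int_closed[OF assms(2) closed_Compl[OF opens[OF a(1)]]] by simp
  then have "sets_converge_to \<phi> (- a) y F'" using a(2) by (intro conv) auto
  then have "eventually (\<lambda>g. \<phi> g ` (- a) \<subseteq> b) F'"
    unfolding sets_converge_to_def using opens[OF b(1)] b(2) by blast
  moreover have "eventually (\<lambda>g. g \<in> ?B) F'"
    using F'(2) by (rule filter_leD) (simp add: F_def eventually_inf_principal)
  ultimately have "eventually (\<lambda>_. False) F'"
    by eventually_elim (use a(1) b(1) in blast)
  with F'(1) show False by (simp add: eventually_False)
qed

lemma convergence_group_pair_covers:
  fixes G (structure) and \<phi> :: "'g \<Rightarrow> 'a::topological_space \<Rightarrow> 'a"
  assumes "convergence_group G \<phi>" "compact (UNIV :: 'a set)" "open_cover \<U>"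
  obtains e where "\<And>g. g \<in> carrier G \<Longrightarrow> finite {h \<in> carrier G. \<not> pair_covers \<phi> \<U> g h}"
    "\<And>g. g \<in> carrier G \<Longrightarrow> card {h \<in> carrier G. \<not> pair_covers \<phi> \<U> g h} \<le> e"
proof -
  let ?E = "{g \<in> carrier G. \<not> (\<exists>a\<in>\<U>. \<exists>b\<in>\<U>. \<phi> g ` (- a) \<subseteq> b)}"
  have "finite ?E" by (rule convergence_group_finite_noncontracting[OF assms])
  have act: "group_action G UNIV \<phi>"
    using assms(1) unfolding convergence_group_def homeo_action_def by blast
  then interpret group G unfolding group_action_def group_hom_def by blast
  have sub: "{h \<in> carrier G. \<not> pair_covers \<phi> \<U> g h} \<subseteq> (\<lambda>d. d \<otimes> g) ` ?E"
    if g: "g \<in> carrier G" for g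
  proof
    fix h assume h: "h \<in> {h \<in> carrier G. \<not> pair_covers \<phi> \<U> g h}"
    let ?d = "h \<otimes> inv g"
    have d: "?d \<in> carrier G" "?d \<otimes> g = h" using h g by (auto simp: m_assoc)
    have "?d \<in> ?E"
    proof (rule ccontr)
      assume "?d \<notin> ?E"
      then obtain a b where ab: "a \<in> \<U>" "b \<in> \<U>" "\<phi> ?d ` (- a) \<subseteq> b" using d(1) by blast
      have "\<phi> h x = \<phi> ?d (\<phi> g x)" for x
        using group_action.composition_rule[OF act, of x ?d g] d g by simp
      then have "\<phi> g -` a \<union> \<phi> h -` b = UNIV" using ab(3) by auto
      with ab(1,2) h show False unfolding pair_covers_def by blast
    qed
    then show "h \<in> (\<lambda>d. d \<otimes> g) ` ?E" using d(2) by (rule rev_image_eqI[OF _ sym])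
  qed
  show thesis
  proof (rule that)
    show "finite {h \<in> carrier G. \<not> pair_covers \<phi> \<U> g h}" if "g \<in> carrier G" for g
      using sub[OF that] \<open>finite ?E\<close> by (rule finite_subset[OF _ finite_imageI])
    show "card {h \<in> carrier G. \<not> pair_covers \<phi> \<U> g h} \<le> card ?E" if "g \<in> carrier G" for g
      using card_mono[OF finite_imageI[OF \<open>finite ?E\<close>] sub[OF that]] card_image_le[OF \<open>finite ?E\<close>]
      by (rule order_trans)
  qed
qed

theorem theorem12p2:
  fixes G :: "('g, 'b) monoid_scheme" and \<phi> :: "'g \<Rightarrow> 'a::t2_space \<Rightarrow> 'a"
  assumes "group G"
    and "compact (UNIV :: 'a set)"
    and "\<exists>a b c :: 'a. a \<noteq> b \<and> a \<noteq> c \<and> b \<noteq> c"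
    and "convergence_group G \<phi>"
  shows "null_system G \<phi>"
  unfolding null_system_def
proof (intro allI impI, elim conjE)
  fix \<U> :: "'a set set" and s :: "nat \<Rightarrow> 'g"
  assume \<U>: "open_cover \<U>" and s: "\<forall>n. s n \<in> carrier G"
  obtain e where "\<And>g. g \<in> carrier G \<Longrightarrow> finite {h \<in> carrier G. \<not> pair_covers \<phi> \<U> g h}"
    "\<And>g. g \<in> carrier G \<Longrightarrow> card {h \<in> carrier G. \<not> pair_covers \<phi> \<U> g h} \<le> e"
    using convergence_group_pair_covers[OF assms(4,2) \<U>] by blast
  moreover have "finite \<U>" "\<Union>\<U> = UNIV" using \<U> unfolding open_cover_def by auto
  moreover have "range s \<subseteq> carrier G" using s by auto
  ultimately show "seq_entropy \<phi> \<U> s = 0"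
    by (intro seq_entropy_eq_0_if_subexponential cover_num_preimage_join_subexponential)
qed

end
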